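(* If $Q$ is a quantity space over a field $K$, then every dimension $\mathsf{C}\in Q/{\sim}$ contains a non-zero unit quantity for $\mathsf{C}$.
   Context: A scalable monoid over a (unital, associative) ring $R$ is a monoid $X$ (identity $1_X$, product written $xy$) together with a map $R\times X\to X$, $(\alpha,x)\mapsto\alpha\cdot x$, such that $1\cdot x=x$, $\alpha\cdot(\beta\cdot x)=\alpha\beta\cdot x$ and $\alpha\cdot(xy)=(\alpha\cdot x)y=x(\alpha\cdot y)$. A quantity space over a field $K$ is a commutative scalable monoid $Q$ over $K$ for which there exists a basis, i.e. a finite set $\{e_1,\ldots,e_n\}$ of invertible elements of $Q$ such that every $x\in Q$ has a unique expansion $x=\mu\cdot\prod_{i=1}^n e_i^{k_i}$ with $\mu\in K$ and $k_i\in\mathbb{Z}$. On $Q$, $x\sim y$ iff $\alpha\cdot x=\beta\cdot y$ for some $\alpha,\beta\in K$; equivalence classes are called dimensions and $Q/{\sim}$ is the set of them. An element $x$ is non-zero if $x\neq0\cdot x$. A unit quantity (unit element) for a class $\mathsf{C}$ is some $u\in\mathsf{C}$ such that every $x\in\mathsf{C}$ equals $\lambda\cdot u$ for some $\lambda\in K$, and such that $\lambda\cdot u=\lambda'\cdot u$ implies $\lambda=\lambda'$. *)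

theory Defs
  imports Main
begin

text \<open>A scalable monoid: the monoid structure is that of the type class
  (identity 1, product *), the scalar action of the ring 'k is the parameter sc.\<close>

definition scalable_monoid :: "('k::ring_1 \<Rightarrow> 'q::monoid_mult \<Rightarrow> 'q) \<Rightarrow> bool" where
  "scalable_monoid sc \<longleftrightarrow>
     (\<forall>x. sc 1 x = x) \<and>
     (\<forall>a b x. sc a (sc b x) = sc (a * b) x) \<and>
     (\<forall>a x y. sc a (x * y) = sc a x * y \<and> sc a (x * y) = x * sc a y)"

definition invertible_elem :: "'q::monoid_mult \<Rightarrow> bool" where
  "invertible_elem x \<longleftrightarrow> (\<exists>y. x * y = 1 \<and> y * x = 1)"

definition minv :: "'q::monoid_mult \<Rightarrow> 'q" where
  "minv x = (THE y. x * y = 1 \<and> y * x = 1)"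

definition zpow :: "'q::monoid_mult \<Rightarrow> int \<Rightarrow> 'q" where
  "zpow x k = (if 0 \<le> k then x ^ nat k else minv x ^ nat (- k))"

definition is_basis :: "('k::field \<Rightarrow> 'q::comm_monoid_mult \<Rightarrow> 'q) \<Rightarrow> 'q set \<Rightarrow> bool" where
  "is_basis sc B \<longleftrightarrow> finite B \<and> (\<forall>e\<in>B. invertible_elem e) \<and>
     (\<forall>x. \<exists>!(\<mu>, k). (\<forall>e. e \<notin> B \<longrightarrow> k e = (0::int)) \<and>
                     x = sc \<mu> (\<Prod>e\<in>B. zpow e (k e)))"

definition quantity_space :: "('k::field \<Rightarrow> 'q::comm_monoid_mult \<Rightarrow> 'q) \<Rightarrow> bool" where
  "quantity_space sc \<longleftrightarrow> scalable_monoid sc \<and> (\<exists>B. is_basis sc B)"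

definition dim_rel :: "('k::field \<Rightarrow> 'q \<Rightarrow> 'q) \<Rightarrow> ('q \<times> 'q) set" where
  "dim_rel sc = {(x, y). \<exists>a b. sc a x = sc b y}"

definition dimensions :: "('k::field \<Rightarrow> 'q \<Rightarrow> 'q) \<Rightarrow> 'q set set" where
  "dimensions sc = UNIV // dim_rel sc"

definition nonzero_q :: "('k::field \<Rightarrow> 'q \<Rightarrow> 'q) \<Rightarrow> 'q \<Rightarrow> bool" where
  "nonzero_q sc x \<longleftrightarrow> x \<noteq> sc 0 x"

definition unit_for :: "('k::field \<Rightarrow> 'q \<Rightarrow> 'q) \<Rightarrow> 'q set \<Rightarrow> 'q \<Rightarrow> bool" where
  "unit_for sc C u \<longleftrightarrow> u \<in> C \<and> (\<forall>x\<in>C. \<exists>l. x = sc l u) \<and>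
     (\<forall>l l'. sc l u = sc l' u \<longrightarrow> l = l')"

end

theory Submission
  imports Defs
begin

text \<open>Expand a representative of the dimension in a basis as \<open>\<mu> \<cdot> m\<close> with \<open>m\<close> a
  monomial in the basis elements. Uniqueness of expansions makes scaling of \<open>m\<close> injective,
  so \<open>m \<noteq> 0 \<cdot> m\<close>, and it forces every element of the dimension to carry the same
  monomial \<open>m\<close>; hence \<open>m\<close> is a non-zero unit for the dimension.\<close>

definition basis_monomial :: "'q::comm_monoid_mult set \<Rightarrow> ('q \<Rightarrow> int) \<Rightarrow> 'q" where
  "basis_monomial B k = (\<Prod>e\<in>B. zpow e (k e))"

lemma is_basis_expansion:
  assumes "is_basis sc B"
  obtains \<mu> k where "\<forall>e. e \<notin> B \<longrightarrow> k e = 0" and "x = sc \<mu> (basis_monomial B k)"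
proof -
  from assms obtain p where "case p of (\<mu>, k) \<Rightarrow>
      (\<forall>e. e \<notin> B \<longrightarrow> k e = (0::int)) \<and> x = sc \<mu> (basis_monomial B k)"
    unfolding is_basis_def basis_monomial_def by (blast elim: ex1E)
  then show thesis
    using that by (cases p) auto
qed

lemma is_basis_expansion_unique:
  assumes "is_basis sc B"
    and "\<forall>e. e \<notin> B \<longrightarrow> k e = 0" and "\<forall>e. e \<notin> B \<longrightarrow> k' e = 0"
    and "sc \<mu> (basis_monomial B k) = sc \<mu>' (basis_monomial B k')"
  shows "\<mu> = \<mu>'" and "k = k'"
proof -
  let ?x = "sc \<mu> (basis_monomial B k)"
  from assms(1) have "\<exists>!(\<mu>, k). (\<forall>e. e \<notin> B \<longrightarrow> k e = (0::int)) \<and>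
      ?x = sc \<mu> (basis_monomial B k)"
    unfolding is_basis_def basis_monomial_def by blast
  then obtain p where "\<forall>q. (case q of (\<mu>, k) \<Rightarrow> (\<forall>e. e \<notin> B \<longrightarrow> k e = (0::int)) \<and>
      ?x = sc \<mu> (basis_monomial B k)) \<longrightarrow> q = p"
    by (auto elim!: ex1E)
  then have "(\<mu>, k) = p" and "(\<mu>', k') = p"
    using assms(2-4) by auto
  then have "(\<mu>, k) = (\<mu>', k')"
    by simp
  then show "\<mu> = \<mu>'" and "k = k'"
    by simp_all
qed

lemma basis_monomial_scale_inj:
  assumes "is_basis sc B" and "\<forall>e. e \<notin> B \<longrightarrow> k e = 0"
    and "sc l (basis_monomial B k) = sc l' (basis_monomial B k)"
  shows "l = l'"
  using is_basis_expansion_unique(1) assms(1,2,2,3) .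

lemma basis_monomial_nonzero:
  assumes "scalable_monoid sc" and "is_basis sc B" and "\<forall>e. e \<notin> B \<longrightarrow> k e = 0"
  shows "nonzero_q sc (basis_monomial B k)"
  unfolding nonzero_q_def
proof
  assume "basis_monomial B k = sc 0 (basis_monomial B k)"
  then have "sc 1 (basis_monomial B k) = sc 0 (basis_monomial B k)"
    using assms(1) by (simp add: scalable_monoid_def)
  then have "(1::'a) = 0"
    using basis_monomial_scale_inj assms(2,3) by blast
  then show False
    by simp
qed

lemma unit_for_basis_monomial:
  assumes "scalable_monoid sc" and "is_basis sc B" and "\<forall>e. e \<notin> B \<longrightarrow> k e = 0"
  shows "unit_for sc (dim_rel sc `` {sc \<mu> (basis_monomial B k)}) (basis_monomial B k)"
  unfolding unit_for_def
proof (intro conjI ballI allI impI)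
  have "sc 1 (sc \<mu> (basis_monomial B k)) = sc \<mu> (basis_monomial B k)"
    using assms(1) by (simp add: scalable_monoid_def)
  then show "basis_monomial B k \<in> dim_rel sc `` {sc \<mu> (basis_monomial B k)}"
    unfolding dim_rel_def by blast
next
  fix y
  assume "y \<in> dim_rel sc `` {sc \<mu> (basis_monomial B k)}"
  then obtain a b where ab: "sc a (sc \<mu> (basis_monomial B k)) = sc b y"
    unfolding dim_rel_def by auto
  obtain \<nu> k' where k': "\<forall>e. e \<notin> B \<longrightarrow> k' e = 0" and y: "y = sc \<nu> (basis_monomial B k')"
    using is_basis_expansion assms(2) .
  have "sc (a * \<mu>) (basis_monomial B k) = sc (b * \<nu>) (basis_monomial B k')"
    using ab y assms(1) by (simp add: scalable_monoid_def)
  then have "k' = k"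
    using is_basis_expansion_unique(2) assms(2,3) k' by metis
  then show "\<exists>l. y = sc l (basis_monomial B k)"
    using y by blast
next
  fix l l'
  assume "sc l (basis_monomial B k) = sc l' (basis_monomial B k)"
  then show "l = l'"
    using basis_monomial_scale_inj assms(2,3) by blast
qed

theorem proposition3p8:
  fixes sc :: "'k::field \<Rightarrow> 'q::comm_monoid_mult \<Rightarrow> 'q"
  assumes "quantity_space sc"
  shows "\<forall>C\<in>dimensions sc. \<exists>u. nonzero_q sc u \<and> unit_for sc C u"
proof
  fix C
  assume "C \<in> dimensions sc"
  then obtain x where C: "C = dim_rel sc `` {x}"
    unfolding dimensions_def quotient_def by blast
  from assms obtain B where sm: "scalable_monoid sc" and B: "is_basis sc B"
    unfolding quantity_space_def by blast
  obtain \<mu> k where k: "\<forall>e. e \<notin> B \<longrightarrow> k e = 0" and x: "x = sc \<mu> (basis_monomial B k)"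
    using is_basis_expansion B .
  show "\<exists>u. nonzero_q sc u \<and> unit_for sc C u"
    using basis_monomial_nonzero[OF sm B k] unit_for_basis_monomial[OF sm B k] C x by blast
qed

end
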